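(* Let $x$ be a random variable with values in $[-1,1]$, and for $\eta>0$ let $\epsilon(\eta)=\frac1\eta\ln\mathbb E[e^{-\eta x}]$. Then for every $\eta>0$, \[ \frac1\eta\ln\mathbb E\big[e^{c\eta^2x^2-\eta x}\big]\;\le\;\epsilon(2\eta)+c\,\eta\,\epsilon(2\eta)^2,\qquad\text{where } c=\frac{1}{1+\sqrt{1+4\eta^2}}. \] *)

theory Defs
  imports "HOL-Probability.Probability"
begin

definition eps_fun :: "'a measure \<Rightarrow> ('a \<Rightarrow> real) \<Rightarrow> real \<Rightarrow> real" where
  "eps_fun M X \<eta> = (1 / \<eta>) * ln (prob_space.expectation M (\<lambda>\<omega>. exp (- \<eta> * X \<omega>)))"

end

theory Submission
  imports Defs
begin

text \<open>With \<open>T = exp (-2\<eta>x)\<close> the integrand is \<open>exp (c\<eta>\<^sup>2x\<^sup>2 - \<eta>x) = \<phi> T\<close> for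
  \<open>\<phi> t = exp (c (ln t)\<^sup>2/4 + (ln t)/2)\<close>, and \<open>\<phi>'' t\<close> has the sign of \<open>c\<^sup>2(ln t)\<^sup>2 + 2c - 1\<close>.
  The value of \<open>c\<close> is the positive root of \<open>4\<eta>\<^sup>2c\<^sup>2 + 2c = 1\<close>, so \<open>\<phi>\<close> is concave on
  \<open>[exp (-2\<eta>), exp (2\<eta>)]\<close>, which contains the range of \<open>T\<close>. Jensen's inequality gives
  \<open>E[\<phi> T] \<le> \<phi> (E T)\<close>, and taking logarithms yields the claim because \<open>ln (E T) = 2\<eta> \<epsilon>(2\<eta>)\<close>.\<close>

text \<open>The library's \<open>jensens_inequality\<close> requires an open interval, which would miss the
  endpoints of the range of \<open>T\<close>; on a closed interval we integrate the tangent at the mean.\<close>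

lemma (in prob_space) jensens_inequality_concave_interval:
  fixes q q' q'' :: "real \<Rightarrow> real"
  assumes X: "integrable M X" "AE \<omega> in M. X \<omega> \<in> {a..b}"
    and q: "integrable M (\<lambda>\<omega>. q (X \<omega>))"
    and q': "\<And>t. t \<in> {a..b} \<Longrightarrow> (q has_real_derivative q' t) (at t)"
    and q'': "\<And>t. t \<in> {a..b} \<Longrightarrow> (q' has_real_derivative q'' t) (at t)"
    and concave: "\<And>t. t \<in> {a..b} \<Longrightarrow> q'' t \<le> 0"
  shows "expectation (\<lambda>\<omega>. q (X \<omega>)) \<le> q (expectation X)"
proof -
  define m where "m = expectation X"
  have m: "m \<in> {a..b}"
    using integral_ge_const[OF X(1)] integral_le_const[OF X(1)] X(2)
    unfolding m_def by auto
  have tangent: "q t \<le> q m + q' m * (t - m)" if "t \<in> {a..b}" for t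
  proof -
    have "(- q' m) * (t - m) \<le> - q t - - q m"
    proof (rule f''_imp_f')
      show "((\<lambda>t. - q t) has_real_derivative - q' x) (at x)" if "x \<in> {a..b}" for x
        using q'[OF that] by (rule DERIV_minus)
      show "((\<lambda>t. - q' t) has_real_derivative - q'' x) (at x)" if "x \<in> {a..b}" for x
        using q''[OF that] by (rule DERIV_minus)
    qed (use concave m that in auto)
    then show ?thesis by simp
  qed
  have "expectation (\<lambda>\<omega>. q (X \<omega>)) \<le> expectation (\<lambda>\<omega>. q m + q' m * (X \<omega> - m))"
    using X tangent by (intro integral_mono_AE q) auto
  also have "\<dots> = q m"
    using X(1) by (simp add: m_def algebra_simps prob_space)
  finally show ?thesis unfolding m_def .
qed

definition phi :: "real \<Rightarrow> real \<Rightarrow> real" where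
  "phi c t = exp (c * (ln t)^2 / 4 + ln t / 2)"

lemma ln_phi: "ln (phi c t) = c * (ln t)^2 / 4 + ln t / 2"
  by (simp add: phi_def)

lemma phi_exp: "phi c (exp (- (2 * s * x))) = exp (c * s^2 * x^2 - s * x)"
  by (simp add: phi_def power2_eq_square algebra_simps)

lemma has_real_derivative_phi:
  "t > 0 \<Longrightarrow> (phi c has_real_derivative phi c t * (c * ln t + 1) / (2 * t)) (at t)"
  unfolding phi_def
  by (rule derivative_eq_intros refl | simp)+ (simp add: field_simps power2_eq_square)

lemma has_real_derivative_phi':
  "t > 0 \<Longrightarrow> ((\<lambda>t. phi c t * (c * ln t + 1) / (2 * t)) has_real_derivative
     phi c t * (c^2 * (ln t)^2 + 2 * c - 1) / (4 * t^2)) (at t)"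
  by (rule derivative_eq_intros has_real_derivative_phi refl | simp)+
     (simp add: phi_def field_simps power2_eq_square)

lemma phi''_nonpos:
  assumes t: "t \<in> {exp (- r)..exp r}" and c: "c^2 * r^2 + 2 * c \<le> 1"
  shows "phi c t * (c^2 * (ln t)^2 + 2 * c - 1) / (4 * t^2) \<le> 0"
proof -
  have "t > 0" using t by (auto intro: less_le_trans[OF exp_gt_zero])
  then have "ln (exp (- r)) \<le> ln t" "ln t \<le> ln (exp r)"
    using t by (subst ln_le_cancel_iff; simp)+
  then have "\<bar>ln t\<bar> \<le> r" by simp
  from power_mono[OF this abs_ge_zero, of 2] have "c^2 * (ln t)^2 \<le> c^2 * r^2"
    by (simp add: mult_left_mono)
  with c \<open>t > 0\<close> show ?thesis
    by (intro divide_nonpos_pos mult_nonneg_nonpos) (auto simp: phi_def)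
qed

lemma phi_exp_bounds:
  assumes "c \<ge> 0" "s \<ge> 0" "\<bar>x\<bar> \<le> 1"
  shows "phi c (exp (- (2 * s * x))) \<in> {exp (- s)..exp (c * s^2 + s)}"
proof -
  have "\<bar>s * x\<bar> \<le> s" "x^2 \<le> 1"
    using assms by (auto simp: abs_mult abs_square_le_1 intro: mult_left_le)
  moreover from this(2) have "0 \<le> c * s^2 * x^2" "c * s^2 * x^2 \<le> c * s^2"
    using assms(1) by (auto intro: mult_left_le)
  ultimately show ?thesis unfolding phi_exp by auto
qed

lemma inverse_one_plus_sqrt_root:
  fixes \<eta> :: real
  assumes "c = 1 / (1 + sqrt (1 + 4 * \<eta>^2))"
  shows "c > 0" "c^2 * (2 * \<eta>)^2 + 2 * c = 1"
proof -
  define s where "s = sqrt (1 + 4 * \<eta>^2)"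
  have s: "s \<ge> 0" "s^2 = 1 + 4 * \<eta>^2" unfolding s_def by simp_all
  have c: "c * (1 + s) = 1" using assms s(1) unfolding s_def[symmetric] by simp
  show "c > 0" using assms s(1) unfolding s_def[symmetric] by simp
  have "4 * \<eta>^2 * c^2 = c^2 * (s^2 - 1)" using s(2) by simp
  also have "\<dots> = c * (s - 1) * (c * (1 + s))" by (simp add: algebra_simps power2_eq_square)
  finally have "4 * \<eta>^2 * c^2 = c * (s - 1)" using c by simp
  then show "c^2 * (2 * \<eta>)^2 + 2 * c = 1" using c by (simp add: algebra_simps)
qed

theorem mainTheorem9:
  fixes M :: "'a measure" and X :: "'a \<Rightarrow> real" and \<eta> :: real
  assumes "prob_space M"
    and "X \<in> borel_measurable M"
    and "\<forall>\<omega>\<in>space M. X \<omega> \<in> {-1..1}"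
    and "\<eta> > 0"
  shows "(let c = 1 / (1 + sqrt (1 + 4 * \<eta>^2)) in
          (1 / \<eta>) * ln (prob_space.expectation M (\<lambda>\<omega>. exp (c * \<eta>^2 * (X \<omega>)^2 - \<eta> * X \<omega>)))
          \<le> eps_fun M X (2 * \<eta>) + c * \<eta> * (eps_fun M X (2 * \<eta>))^2)"
proof -
  interpret prob_space M by fact
  define c where "c = 1 / (1 + sqrt (1 + 4 * \<eta>^2))"
  define T where "T = (\<lambda>\<omega>. exp (- (2 * \<eta> * X \<omega>)))"
  define m where "m = expectation T"
  have c: "c > 0" "c^2 * (2 * \<eta>)^2 + 2 * c = 1"
    by (fact inverse_one_plus_sqrt_root[OF c_def])+
  have X: "\<bar>X \<omega>\<bar> \<le> 1" if "\<omega> \<in> space M" for \<omega>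
    using assms(3) that by auto
  have T_range: "T \<omega> \<in> {exp (- (2 * \<eta>))..exp (2 * \<eta>)}" if "\<omega> \<in> space M" for \<omega>
  proof -
    have "\<bar>\<eta> * X \<omega>\<bar> \<le> \<eta>" using X[OF that] assms(4) by (simp add: abs_mult mult_left_le)
    then show ?thesis by (auto simp: T_def abs_le_iff)
  qed
  have T_int: "integrable M T"
    using T_range assms(2) unfolding T_def
    by (intro integrable_const_bound[where B = "exp (2 * \<eta>)"]) auto
  have phiT_range: "phi c (T \<omega>) \<in> {exp (- \<eta>)..exp (c * \<eta>^2 + \<eta>)}" if "\<omega> \<in> space M" for \<omega>
    unfolding T_def using phi_exp_bounds c(1) assms(4) X[OF that] by simp
  have phiT_int: "integrable M (\<lambda>\<omega>. phi c (T \<omega>))"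
    using phiT_range assms(2) unfolding T_def phi_exp
    by (intro integrable_const_bound[where B = "exp (c * \<eta>^2 + \<eta>)"]) auto
  have "expectation (\<lambda>\<omega>. phi c (T \<omega>)) \<le> phi c m"
    unfolding m_def
    by (rule jensens_inequality_concave_interval[OF T_int _ phiT_int has_real_derivative_phi
          has_real_derivative_phi' phi''_nonpos])
       (use T_range c(2) in \<open>auto intro: less_le_trans[OF exp_gt_zero]\<close>)
  moreover have "expectation (\<lambda>\<omega>. phi c (T \<omega>)) > 0"
    using phiT_range by (intro less_le_trans[OF exp_gt_zero integral_ge_const[OF phiT_int]]) auto
  ultimately have "ln (expectation (\<lambda>\<omega>. phi c (T \<omega>))) \<le> c * (ln m)^2 / 4 + ln m / 2"
    unfolding ln_phi[symmetric] by (subst ln_le_cancel_iff) (auto simp: phi_def)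
  moreover have "ln m = 2 * \<eta> * eps_fun M X (2 * \<eta>)"
    using assms(4) by (simp add: eps_fun_def m_def T_def)
  ultimately have "(1 / \<eta>) * ln (expectation (\<lambda>\<omega>. phi c (T \<omega>)))
      \<le> eps_fun M X (2 * \<eta>) + c * \<eta> * (eps_fun M X (2 * \<eta>))^2"
    using assms(4) by (simp add: field_simps power2_eq_square)
  then show ?thesis unfolding Let_def c_def[symmetric] T_def phi_exp .
qed

end
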